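(* Let $H$ be a digraph (possibly with loops) and let $D$ be an $H$-colored $3$-quasi-transitive digraph. For every $k \geq 5$, $D$ has a $(k,H)$-kernel.
   Context: All digraphs are finite. A digraph $D$ is $3$-quasi-transitive if for all distinct $u,v\in V(D)$, whenever there is a directed $uv$-path of length $3$, $u$ and $v$ are joined by an arc (in some direction). $D$ has no loops and comes with a map $\rho: A(D)\to V(H)$. For a walk $W=(x_0,\ldots,x_n)$ in $D$, there is an obstruction on $x_i$ if $(\rho(x_{i-1},x_i),\rho(x_i,x_{i+1})) \notin A(H)$; for an open walk this is considered at internal vertices $x_i$, $1\le i\le n-1$, for a closed walk at all $i\in\{0,\ldots,n-1\}$ with indices modulo $n$. $O_H(W)$ is the set of indices with an obstruction; the $H$-length is $l_H(W)=|O_H(W)|+1$ for open $W$ and $|O_H(W)|$ for closed $W$. A $(k,H)$-kernel ($k\ge2$) is a set $S\subseteq V(D)$ such that for every two distinct $u,v\in S$ every directed $uv$-path in $D$ has $H$-length at least $k$, and for every $x\in V(D)\setminus S$ there is a directed path from $x$ to a vertex of $S$ of $H$-length at most $k-1$. *)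

theory Defs
  imports Main
begin

definition digraph :: "'a set \<Rightarrow> ('a \<times> 'a) set \<Rightarrow> bool" where
  "digraph V A \<longleftrightarrow> A \<subseteq> V \<times> V"

definition loopless :: "('a \<times> 'a) set \<Rightarrow> bool" where
  "loopless A \<longleftrightarrow> (\<forall>x. (x, x) \<notin> A)"

definition H_colored :: "('a \<times> 'a) set \<Rightarrow> 'c set \<Rightarrow> ('a \<times> 'a \<Rightarrow> 'c) \<Rightarrow> bool" where
  "H_colored A VH rho \<longleftrightarrow> (\<forall>e\<in>A. rho e \<in> VH)"

text \<open>A directed walk is a nonempty list of vertices with consecutive arcs;
  its length is the number of arcs (length of the list minus one).\<close>
definition is_walk :: "('a \<times> 'a) set \<Rightarrow> 'a list \<Rightarrow> bool" where
  "is_walk A xs \<longleftrightarrow> xs \<noteq> [] \<and> (\<forall>i. Suc i < length xs \<longrightarrow> (xs ! i, xs ! Suc i) \<in> A)"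

definition is_path :: "('a \<times> 'a) set \<Rightarrow> 'a list \<Rightarrow> bool" where
  "is_path A xs \<longleftrightarrow> is_walk A xs \<and> distinct xs"

definition uv_path :: "('a \<times> 'a) set \<Rightarrow> 'a \<Rightarrow> 'a \<Rightarrow> 'a list \<Rightarrow> bool" where
  "uv_path A u v xs \<longleftrightarrow> is_path A xs \<and> hd xs = u \<and> last xs = v"

definition three_quasi_transitive :: "'a set \<Rightarrow> ('a \<times> 'a) set \<Rightarrow> bool" where
  "three_quasi_transitive V A \<longleftrightarrow>
     (\<forall>u\<in>V. \<forall>v\<in>V. u \<noteq> v \<longrightarrow>
        (\<exists>xs. uv_path A u v xs \<and> length xs = 4) \<longrightarrow> (u, v) \<in> A \<or> (v, u) \<in> A)"

definition obstructions_open ::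
  "('c \<times> 'c) set \<Rightarrow> ('a \<times> 'a \<Rightarrow> 'c) \<Rightarrow> 'a list \<Rightarrow> nat set" where
  "obstructions_open AH rho xs =
     {i. 1 \<le> i \<and> Suc i < length xs \<and>
         (rho (xs ! (i - 1), xs ! i), rho (xs ! i, xs ! Suc i)) \<notin> AH}"

definition H_length_open ::
  "('c \<times> 'c) set \<Rightarrow> ('a \<times> 'a \<Rightarrow> 'c) \<Rightarrow> 'a list \<Rightarrow> nat" where
  "H_length_open AH rho xs = card (obstructions_open AH rho xs) + 1"

definition kH_kernel ::
  "'a set \<Rightarrow> ('a \<times> 'a) set \<Rightarrow> ('c \<times> 'c) set \<Rightarrow> ('a \<times> 'a \<Rightarrow> 'c) \<Rightarrow> nat \<Rightarrow> 'a set \<Rightarrow> bool" where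
  "kH_kernel V A AH rho k S \<longleftrightarrow> S \<subseteq> V \<and>
     (\<forall>u\<in>S. \<forall>v\<in>S. u \<noteq> v \<longrightarrow>
        (\<forall>xs. uv_path A u v xs \<longrightarrow> H_length_open AH rho xs \<ge> k)) \<and>
     (\<forall>x\<in>V - S. \<exists>v\<in>S. \<exists>xs. uv_path A x v xs \<and> H_length_open AH rho xs \<le> k - 1)"

end

theory Submission
  imports Defs
begin

text \<open>In every terminal strong component choose a vertex \<open>s\<close> of maximum in-degree. No path
  joins two chosen vertices, so the independence condition holds vacuously, whatever the
  colouring.
  Every vertex \<open>t\<close> reaches some chosen \<open>s\<close>, and 3-quasi-transitivity bounds the distance by 4:
  otherwise a shortest walk ends in \<open>y\<^sub>0 \<rightarrow> y\<^sub>1 \<rightarrow> y\<^sub>2 \<rightarrow> y\<^sub>3 \<rightarrow> y\<^sub>4 \<rightarrow> s\<close> with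
  \<open>y\<^sub>i\<close> at distance \<open>5 - i\<close>, and minimality forces the arcs \<open>y\<^sub>3 \<rightarrow> y\<^sub>0\<close>,
  \<open>s \<rightarrow> y\<^sub>2\<close>, \<open>s \<rightarrow> y\<^sub>0\<close> and \<open>w \<rightarrow> y\<^sub>1\<close> for every in-neighbour \<open>w\<close> of \<open>s\<close>.
  Then \<open>y\<^sub>1\<close> lies in the strong component of \<open>s\<close> and has larger in-degree
  (it also has the in-neighbour \<open>y\<^sub>0\<close>). A shortest path of length at most 4 has
  \<open>H\<close>-length at most \<open>4 \<le> k - 1\<close>.\<close>

lemma is_walk_iff_successively:
  "is_walk A xs \<longleftrightarrow> xs \<noteq> [] \<and> successively (\<lambda>x y. (x, y) \<in> A) xs"
  by (simp add: is_walk_def successively_conv_nth)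

lemma relpow_imp_walk:
  assumes "(x, y) \<in> A ^^ n"
  shows "\<exists>xs. is_walk A xs \<and> hd xs = x \<and> last xs = y \<and> length xs = Suc n"
  using assms
proof (induction n arbitrary: x)
  case 0
  then show ?case by (intro exI[of _ "[x]"]) (simp add: is_walk_iff_successively)
next
  case (Suc n)
  then obtain z where "(x, z) \<in> A" "(z, y) \<in> A ^^ n" by (blast elim: relpow_Suc_E2)
  with Suc.IH obtain xs where "is_walk A xs" "hd xs = z" "last xs = y" "length xs = Suc n"
    by blast
  with \<open>(x, z) \<in> A\<close> show ?case
    by (intro exI[of _ "x # xs"]) (auto simp: is_walk_iff_successively successively_Cons)
qed

lemma walk_imp_relpow:
  "is_walk A xs \<Longrightarrow> (hd xs, last xs) \<in> A ^^ (length xs - 1)"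
proof (induction xs rule: induct_list012)
  case (3 x y zs)
  then have "(y, last (y # zs)) \<in> A ^^ length zs" "(x, y) \<in> A"
    by (auto simp: is_walk_iff_successively)
  then have "(x, last (y # zs)) \<in> A ^^ Suc (length zs)" by (blast intro: relpow_Suc_I2)
  then show ?case by simp
qed (simp_all add: is_walk_def)

lemma uv_path_imp_rtrancl: "uv_path A u v xs \<Longrightarrow> (u, v) \<in> A\<^sup>*"
  unfolding uv_path_def is_path_def by (metis walk_imp_relpow relpow_imp_rtrancl)

lemma walk_shortcut:
  assumes "is_walk A xs" "\<not> distinct xs"
  obtains ys where "is_walk A ys" "hd ys = hd xs" "last ys = last xs" "length ys < length xs"
proof -
  obtain as bs cs y where xs: "xs = as @ [y] @ bs @ [y] @ cs"
    using not_distinct_decomp[OF assms(2)] by blast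
  have "is_walk A (as @ [y] @ cs)"
    using assms(1) unfolding xs is_walk_iff_successively
    by (auto simp: successively_append_iff successively_Cons)
  then show ?thesis by (rule that) (auto simp: xs hd_append)
qed

lemma walk_imp_path:
  "is_walk A xs \<Longrightarrow> \<exists>ys. uv_path A (hd xs) (last xs) ys \<and> length ys \<le> length xs"
proof (induction "length xs" arbitrary: xs rule: less_induct)
  case less
  show ?case
  proof (cases "distinct xs")
    case True
    with less.prems show ?thesis by (auto simp: uv_path_def is_path_def)
  next
    case False
    with less.prems obtain ys where
      "is_walk A ys" "hd ys = hd xs" "last ys = last xs" "length ys < length xs"
      by (rule walk_shortcut)
    with less.hyps show ?thesis by fastforce
  qed
qed

lemma relpow_imp_path:
  "(x, y) \<in> A ^^ n \<Longrightarrow> \<exists>xs. uv_path A x y xs \<and> length xs \<le> Suc n"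
  by (metis relpow_imp_walk walk_imp_path)

lemma H_length_open_le:
  assumes "2 \<le> length xs"
  shows "H_length_open AH rho xs \<le> length xs - 1"
proof -
  have "obstructions_open AH rho xs \<subseteq> {1..<length xs - 1}"
    unfolding obstructions_open_def by auto
  then have "card (obstructions_open AH rho xs) \<le> length xs - 2"
    using card_mono[of "{1..<length xs - 1}"] by (simp add: numeral_2_eq_2)
  with assms show ?thesis unfolding H_length_open_def by simp
qed

lemma three_quasi_transitiveD:
  assumes "three_quasi_transitive V A" "digraph V A"
    and "(a, b) \<in> A" "(b, c) \<in> A" "(c, d) \<in> A" "distinct [a, b, c, d]"
  shows "(a, d) \<in> A \<or> (d, a) \<in> A"
proof -
  have "uv_path A a d [a, b, c, d]"
    using assms(3-6) by (simp add: uv_path_def is_path_def is_walk_iff_successively)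
  moreover have "a \<in> V" "d \<in> V" using assms(2-5) by (auto simp: digraph_def)
  ultimately show ?thesis using assms(1,6) unfolding three_quasi_transitive_def by fastforce
qed

text \<open>Unspecified unless \<open>(x, y) \<in> A\<^sup>*\<close>.\<close>

definition walk_dist :: "('a \<times> 'a) set \<Rightarrow> 'a \<Rightarrow> 'a \<Rightarrow> nat" where
  "walk_dist A x y = (LEAST n. (x, y) \<in> A ^^ n)"

lemma walk_dist_relpow: "(x, y) \<in> A\<^sup>* \<Longrightarrow> (x, y) \<in> A ^^ walk_dist A x y"
  unfolding walk_dist_def by (metis LeastI rtrancl_power)

lemma walk_dist_le: "(x, y) \<in> A ^^ n \<Longrightarrow> walk_dist A x y \<le> n"
  unfolding walk_dist_def by (rule Least_le)

lemma walk_dist_self [simp]: "walk_dist A x x = 0"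
  unfolding walk_dist_def by (rule Least_eq_0) simp

lemma walk_dist_arc:
  "(x, y) \<in> A \<Longrightarrow> (y, z) \<in> A\<^sup>* \<Longrightarrow> walk_dist A x z \<le> Suc (walk_dist A y z)"
  by (meson walk_dist_le walk_dist_relpow relpow_Suc_I2)

lemma walk_dist_SucE:
  assumes "(x, z) \<in> A\<^sup>*" "walk_dist A x z = Suc n"
  obtains y where "(x, y) \<in> A" "(y, z) \<in> A\<^sup>*" "walk_dist A y z = n"
proof -
  from assms have "(x, z) \<in> A ^^ Suc n" using walk_dist_relpow by metis
  then obtain y where y: "(x, y) \<in> A" "(y, z) \<in> A ^^ n" by (blast elim: relpow_Suc_E2)
  from y(2) have "(y, z) \<in> A\<^sup>*" by (rule relpow_imp_rtrancl)
  moreover have "walk_dist A y z = n"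
    using walk_dist_le[OF y(2)] walk_dist_arc[OF y(1) \<open>(y, z) \<in> A\<^sup>*\<close>] assms(2) by simp
  ultimately show ?thesis using y(1) that by blast
qed

lemma walk_dist_intermediateE:
  assumes "(x, z) \<in> A\<^sup>*" "n \<le> walk_dist A x z"
  obtains y where "(y, z) \<in> A\<^sup>*" "walk_dist A y z = n"
  using assms
proof (induction "walk_dist A x z" arbitrary: x)
  case 0
  then show ?case by auto
next
  case (Suc m)
  show ?case
  proof (cases "n = Suc m")
    case True
    with Suc show ?thesis by metis
  next
    case False
    obtain y where "(y, z) \<in> A\<^sup>*" "walk_dist A y z = m"
      using walk_dist_SucE[OF Suc.prems(2) Suc.hyps(2)[symmetric]] .
    with Suc False show ?thesis by (metis le_Suc_eq)
  qed
qed

lemma shortest_path_H_length_le: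
  assumes "(x, y) \<in> A\<^sup>*" "x \<noteq> y"
  obtains xs where "uv_path A x y xs" "H_length_open AH rho xs \<le> walk_dist A x y"
proof -
  obtain xs where xs: "uv_path A x y xs" "length xs \<le> Suc (walk_dist A x y)"
    using relpow_imp_path[OF walk_dist_relpow[OF assms(1)]] by blast
  have "2 \<le> length xs"
    using xs(1) assms(2)
    by (cases xs) (auto simp: uv_path_def is_path_def is_walk_def Suc_le_eq split: if_splits)
  then have "H_length_open AH rho xs \<le> length xs - 1" by (rule H_length_open_le)
  with xs show ?thesis using that by simp
qed

definition in_degree :: "('a \<times> 'a) set \<Rightarrow> 'a \<Rightarrow> nat" where
  "in_degree A v = card {u. (u, v) \<in> A}"

definition scc :: "('a \<times> 'a) set \<Rightarrow> 'a \<Rightarrow> 'a set" where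
  "scc A v = {u. (v, u) \<in> A\<^sup>* \<and> (u, v) \<in> A\<^sup>*}"

lemma in_degree_less:
  assumes "finite V" "digraph V A" "(y, v) \<in> A" "(y, u) \<notin> A"
    and "\<And>w. (w, u) \<in> A \<Longrightarrow> (w, v) \<in> A"
  shows "in_degree A u < in_degree A v"
proof -
  have fin: "finite {w. (w, x) \<in> A}" for x
    using finite_subset[OF _ assms(1), of "{w. (w, x) \<in> A}"] assms(2)
    by (auto simp: digraph_def)
  have "Suc (in_degree A u) = card (insert y {w. (w, u) \<in> A})"
    unfolding in_degree_def using fin assms(4) by simp
  also have "\<dots> \<le> in_degree A v"
    unfolding in_degree_def using assms(3,5) by (intro card_mono[OF fin]) auto
  finally show ?thesis by simp
qed

lemma walk_dist_to_max_in_degree_le_4: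
  assumes "finite V" "digraph V A" "loopless A" and qt: "three_quasi_transitive V A"
    and max: "\<forall>u\<in>scc A s. in_degree A u \<le> in_degree A s"
    and "(t, s) \<in> A\<^sup>*"
  shows "walk_dist A t s \<le> 4"
proof (rule ccontr)
  assume "\<not> walk_dist A t s \<le> 4"
  then obtain y0 where r0: "(y0, s) \<in> A\<^sup>*" and d0: "walk_dist A y0 s = 5"
    using walk_dist_intermediateE[OF assms(6), of 5] by auto
  obtain y1 where a0: "(y0, y1) \<in> A" and r1: "(y1, s) \<in> A\<^sup>*" and d1: "walk_dist A y1 s = 4"
    using walk_dist_SucE[OF r0, of 4] d0 by auto
  obtain y2 where a1: "(y1, y2) \<in> A" and r2: "(y2, s) \<in> A\<^sup>*" and d2: "walk_dist A y2 s = 3"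
    using walk_dist_SucE[OF r1, of 3] d1 by auto
  obtain y3 where a2: "(y2, y3) \<in> A" and r3: "(y3, s) \<in> A\<^sup>*" and d3: "walk_dist A y3 s = 2"
    using walk_dist_SucE[OF r2, of 2] d2 by auto
  obtain y4 where a3: "(y3, y4) \<in> A" and r4: "(y4, s) \<in> A\<^sup>*" and d4: "walk_dist A y4 s = 1"
    using walk_dist_SucE[OF r3, of 1] d3 by auto
  from r4 d4 have a4: "(y4, s) \<in> A" using walk_dist_relpow by fastforce
  have far: "(x, y) \<notin> A" if "(y, s) \<in> A\<^sup>*" "Suc (walk_dist A y s) < walk_dist A x s" for x y
    using walk_dist_arc that by fastforce
  have distinct: "distinct [y0, y1, y2, y3, y4, s]"
    using d0 d1 d2 d3 d4 by auto
  note qt3 = three_quasi_transitiveD[OF qt assms(2)]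
  have y3_y0: "(y3, y0) \<in> A"
    using qt3[OF a0 a1 a2] far[OF r3, of y0] distinct d0 d3 by auto
  have s_y2: "(s, y2) \<in> A"
    using qt3[OF a2 a3 a4] far[OF rtrancl_refl, of y2] distinct d2 by auto
  have y0_s: "(y0, s) \<notin> A"
    using far[OF rtrancl_refl, of y0] d0 by simp
  have s_y0: "(s, y0) \<in> A"
    using qt3[OF s_y2 a2 y3_y0] y0_s distinct by auto
  have in_y1: "(w, y1) \<in> A" if w: "(w, s) \<in> A" for w
  proof -
    have "walk_dist A w s \<le> 1" using walk_dist_arc[OF w rtrancl_refl] by simp
    then have "w \<noteq> y0" "w \<noteq> y1" using d0 d1 by auto
    moreover have "w \<noteq> s" using w \<open>loopless A\<close> by (auto simp: loopless_def)
    moreover have "(y1, w) \<notin> A"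
      using far[OF r_into_rtrancl[OF w], of y1] \<open>walk_dist A w s \<le> 1\<close> d1 by simp
    ultimately show ?thesis using qt3[OF w s_y0 a0] distinct by auto
  qed
  have "in_degree A s < in_degree A y1"
    using in_degree_less[OF assms(1,2) a0 y0_s] in_y1 by blast
  moreover have "y1 \<in> scc A s"
    using r1 s_y0 a0 by (auto simp: scc_def)
  ultimately show False using max by fastforce
qed

lemma arg_max_on_finite:
  fixes f :: "'a \<Rightarrow> 'b::linorder"
  assumes "finite S" "S \<noteq> {}"
  shows "arg_max_on f S \<in> S" "\<forall>y\<in>S. f y \<le> f (arg_max_on f S)"
proof -
  have "Max (f ` S) \<in> f ` S" using assms by (intro Max_in) auto
  then obtain x where x: "x \<in> S" "f x = Max (f ` S)" by auto
  then have "is_arg_max f (\<lambda>y. y \<in> S) x"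
    using assms(1) by (simp add: is_arg_max_linorder)
  then have "is_arg_max f (\<lambda>y. y \<in> S) (arg_max_on f S)"
    unfolding arg_max_on_def arg_max_def by (rule someI)
  then show "arg_max_on f S \<in> S" "\<forall>y\<in>S. f y \<le> f (arg_max_on f S)"
    by (simp_all add: is_arg_max_linorder)
qed

definition terminal :: "('a \<times> 'a) set \<Rightarrow> 'a \<Rightarrow> bool" where
  "terminal A v \<longleftrightarrow> (\<forall>u. (v, u) \<in> A\<^sup>* \<longrightarrow> (u, v) \<in> A\<^sup>*)"

lemma rtrancl_digraph_closed: "(x, y) \<in> A\<^sup>* \<Longrightarrow> digraph V A \<Longrightarrow> x \<in> V \<Longrightarrow> y \<in> V"
  by (induction rule: rtrancl_induct) (auto simp: digraph_def)

lemma finite_scc: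
  assumes "finite V" "digraph V A" "v \<in> V"
  shows "finite (scc A v)"
  using assms by (auto simp: scc_def intro: finite_subset rtrancl_digraph_closed)

lemma terminal_reachable:
  assumes "finite V" "digraph V A" "x \<in> V"
  obtains u where "(x, u) \<in> A\<^sup>*" "terminal A u"
proof -
  have fin: "finite (A\<^sup>* `` {v})" if "v \<in> V" for v
    using assms that by (auto intro: finite_subset rtrancl_digraph_closed)
  obtain u where u: "(x, u) \<in> A\<^sup>*"
    and min: "\<forall>w. (x, w) \<in> A\<^sup>* \<longrightarrow> card (A\<^sup>* `` {u}) \<le> card (A\<^sup>* `` {w})"
    using ex_has_least_nat[of "\<lambda>u. (x, u) \<in> A\<^sup>*" x "\<lambda>u. card (A\<^sup>* `` {u})"] by auto
  have "terminal A u"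
    unfolding terminal_def
  proof (intro allI impI)
    fix w assume uw: "(u, w) \<in> A\<^sup>*"
    then have "A\<^sup>* `` {w} \<subseteq> A\<^sup>* `` {u}" by auto
    moreover have "card (A\<^sup>* `` {u}) \<le> card (A\<^sup>* `` {w})"
      using min u uw by (meson rtrancl_trans)
    moreover have "finite (A\<^sup>* `` {u})"
      using fin rtrancl_digraph_closed[OF u assms(2,3)] .
    ultimately have "A\<^sup>* `` {w} = A\<^sup>* `` {u}"
      by (intro card_subset_eq) (auto intro: le_antisym card_mono)
    then show "(w, u) \<in> A\<^sup>*" by auto
  qed
  with u show ?thesis by (rule that)
qed

lemma terminal_rtrancl:
  assumes "terminal A u" "(u, v) \<in> A\<^sup>*"
  shows "terminal A v" "scc A v = scc A u"
  using assms unfolding terminal_def scc_def by (blast intro: rtrancl_trans)+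

definition sink_representatives :: "'a set \<Rightarrow> ('a \<times> 'a) set \<Rightarrow> 'a set" where
  "sink_representatives V A =
     {s \<in> V. terminal A s \<and> arg_max_on (in_degree A) (scc A s) = s}"

lemma sink_representatives_unreachable:
  assumes "u \<in> sink_representatives V A" "v \<in> sink_representatives V A" "(u, v) \<in> A\<^sup>*"
  shows "u = v"
  using assms terminal_rtrancl(2)[of A u v] by (auto simp: sink_representatives_def)

lemma reaches_sink_representative:
  assumes "finite V" "digraph V A" "x \<in> V"
  obtains s where "s \<in> sink_representatives V A" "(x, s) \<in> A\<^sup>*"
    "\<forall>u\<in>scc A s. in_degree A u \<le> in_degree A s"
proof -
  obtain u where xu: "(x, u) \<in> A\<^sup>*" and u: "terminal A u"
    using terminal_reachable[OF assms] .
  have uV: "u \<in> V" using rtrancl_digraph_closed[OF xu assms(2,3)] .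
  define s where "s = arg_max_on (in_degree A) (scc A u)"
  have scc_u: "finite (scc A u)" "scc A u \<noteq> {}"
    using finite_scc[OF assms(1,2) uV] by (auto simp: scc_def)
  have "s \<in> scc A u"
    unfolding s_def using arg_max_on_finite(1)[OF scc_u] .
  then have us: "(u, s) \<in> A\<^sup>*" by (simp add: scc_def)
  note s_scc = terminal_rtrancl[OF u us]
  have "s \<in> sink_representatives V A"
    using s_scc rtrancl_digraph_closed[OF us assms(2) uV]
    by (simp add: sink_representatives_def s_def)
  moreover have "(x, s) \<in> A\<^sup>*" using xu us by (rule rtrancl_trans)
  moreover have "\<forall>u\<in>scc A s. in_degree A u \<le> in_degree A s"
    using arg_max_on_finite(2)[OF scc_u, of "in_degree A"] s_scc(2) by (simp add: s_def)
  ultimately show ?thesis by (rule that)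
qed

theorem theorem19:
  fixes V :: "'a set" and A :: "('a \<times> 'a) set"
    and VH :: "'c set" and AH :: "('c \<times> 'c) set"
    and rho :: "'a \<times> 'a \<Rightarrow> 'c" and k :: nat
  assumes "finite V" and "digraph V A" and "loopless A"
    and "finite VH" and "digraph VH AH"
    and "H_colored A VH rho"
    and "three_quasi_transitive V A"
    and "k \<ge> 5"
  shows "\<exists>S. kH_kernel V A AH rho k S"
proof -
  let ?S = "sink_representatives V A"
  have "kH_kernel V A AH rho k ?S"
    unfolding kH_kernel_def
  proof (intro conjI ballI impI allI)
    show "?S \<subseteq> V" by (auto simp: sink_representatives_def)
  next
    fix u v xs
    assume "u \<in> ?S" "v \<in> ?S" "u \<noteq> v" "uv_path A u v xs"
    then show "k \<le> H_length_open AH rho xs"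
      using sink_representatives_unreachable uv_path_imp_rtrancl by metis
  next
    fix x assume x: "x \<in> V - ?S"
    obtain s where s: "s \<in> ?S" "(x, s) \<in> A\<^sup>*" "\<forall>u\<in>scc A s. in_degree A u \<le> in_degree A s"
      using reaches_sink_representative[OF assms(1,2)] x by blast
    have "walk_dist A x s \<le> 4"
      using walk_dist_to_max_in_degree_le_4[OF assms(1-3,7) s(3,2)] .
    moreover obtain xs where "uv_path A x s xs" "H_length_open AH rho xs \<le> walk_dist A x s"
      using shortest_path_H_length_le[OF s(2)] x s(1) by blast
    ultimately show "\<exists>v\<in>?S. \<exists>xs. uv_path A x v xs \<and> H_length_open AH rho xs \<le> k - 1"
      using s(1) \<open>k \<ge> 5\<close> by fastforce
  qed
  then show ?thesis ..
qed

end
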